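(* Consider the multi-element (three spatial elements, periodic), single-slab space-time SBP scheme $$\mathsf D_t\boldsymbol\rho+\tilde{\mathsf D}_x\langle v\boldsymbol g\rangle=-\sigma_a\boldsymbol\rho-\mathsf H_t^{-1}\mathsf t_B\mathsf t_B^\top(\boldsymbol\rho-\boldsymbol\rho(0)),$$ $$\mathsf D_t\boldsymbol g_k+\tfrac{v_k}{\varepsilon}\tilde{\mathsf D}_x\boldsymbol g_k-\tfrac1\varepsilon\langle v\tilde{\mathsf D}_x\boldsymbol g\rangle+\tfrac{v_k}{\varepsilon^2}\tilde{\mathsf D}_x\boldsymbol\rho=-\Big(\tfrac{\sigma_s}{\varepsilon^2}+\sigma_a\Big)\boldsymbol g_k-\mathsf H_t^{-1}\mathsf t_B\mathsf t_B^\top(\boldsymbol g_k-\boldsymbol g_k(0)),\quad k=1,\dots,n_v.$$ This scheme is asymptotic preserving: for fixed discretization, in the formal limit $\varepsilon\to0$ (assuming the discrete derivative approximations remain bounded) it reduces to $\mathsf D_t\boldsymbol\rho=\tilde{\mathsf D}_x\big(\tfrac{\langle v^2\rangle}{\sigma_s}\tilde{\mathsf D}_x\boldsymbol\rho\big)-\sigma_a\boldsymbol\rho-\mathsf H_t^{-1}\mathsf t_B\mathsf t_B^\top(\boldsymbol\rho-\boldsymbol\rho(0))$, a consistent and stable discretization of $\partial_t\rho=\langle v^2\rangle\partial_x\big(\tfrac1{\sigma_s}\partial_x\rho\big)-\sigma_a\rho$.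
   Context: SBP operators: $\bar{\mathsf D}=\bar{\mathsf H}^{-1}\bar{\mathsf Q}$ on nodes $x_0<\dots<x_n$ is a degree-$p$ SBP approximation of $d/dx$ if it differentiates monomials of degree $\le p$ exactly, $\bar{\mathsf H}$ is diagonal symmetric positive definite, and $\bar{\mathsf Q}+\bar{\mathsf Q}^\top=\bar{\mathsf E}=\bar{\boldsymbol t}_R\bar{\boldsymbol t}_R^\top-\bar{\boldsymbol t}_L\bar{\boldsymbol t}_L^\top=\mathrm{diag}(-1,0,\dots,0,1)$, $\bar{\boldsymbol t}_L,\bar{\boldsymbol t}_R$ first/last unit vectors. $\bar{\mathsf D}_x=\bar{\mathsf H}_x^{-1}\bar{\mathsf Q}_x$ on $n_x+1$ spatial nodes per element, $\bar{\mathsf S}_x=\bar{\mathsf Q}_x-\frac12\bar{\mathsf E}_x$; $\bar{\mathsf D}_t=\bar{\mathsf H}_t^{-1}\bar{\mathsf Q}_t$ on $n_t+1$ temporal nodes with first/last unit vectors $\bar{\boldsymbol t}_B,\bar{\boldsymbol t}_T$. $\tilde{\bar{\mathsf D}}^G_x=(\mathsf I_3\otimes\bar{\mathsf H}_x^{-1})\tilde{\bar{\mathsf Q}}^G_x$, with $\tilde{\bar{\mathsf Q}}^G_x$ the $3\times3$ block matrix having diagonal blocks $\bar{\mathsf S}_x$, blocks $(1,2),(2,3),(3,1)$ equal to $\frac12\bar{\boldsymbol t}_R\bar{\boldsymbol t}_L^\top$, blocks $(2,1),(3,2),(1,3)$ equal to $-\frac12\bar{\boldsymbol t}_L\bar{\boldsymbol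 t}_R^\top$. $\tilde{\mathsf D}_x=\mathsf I_{n_t}\otimes\tilde{\bar{\mathsf D}}^G_x$, $\mathsf D_t=\bar{\mathsf D}_t\otimes\mathsf I_3\otimes\mathsf I_{n_x}$, $\mathsf H_t=\bar{\mathsf H}_t\otimes\mathsf I_3\otimes\mathsf I_{n_x}$, $\mathsf t_B=\bar{\boldsymbol t}_B\otimes\mathsf I_3\otimes\mathsf I_{n_x}$ ($\mathsf I_{n_x},\mathsf I_{n_t}$ identities of sizes $n_x+1,n_t+1$). Velocity nodes $v_k$, weights $\omega_k$ with $\sum\omega_k=1$, $\sum\omega_kv_k=0$; $\langle\boldsymbol a\rangle=\sum\omega_k\boldsymbol a_k$, $\langle v^2\rangle=\sum\omega_kv_k^2$. $\varepsilon>0$, $\sigma_s>0$, $\sigma_a\ge0$. A scheme is asymptotic preserving if, for fixed discretization parameters, in the limit $\varepsilon\to0$ it becomes a consistent (and stable) discretization of the macroscopic limit equation; stability of the limit scheme means the final-time discrete energy is bounded by initial-data terms. *)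

theory Defs
  imports "HOL-Analysis.Analysis"
begin

text \<open>Square matrices of size (n+1) x (n+1) are represented as functions
  on indices 0..n.  Grid functions on the space-time slab are indexed by
  (time node i in 0..nt, element e in 0..2, spatial node j in 0..nx);
  this is the index ordering of the Kronecker products
  (time) x (I_3) x (I_nx) used in the paper.\<close>

type_synonym rmat = "nat \<Rightarrow> nat \<Rightarrow> real"
type_synonym grid = "nat \<Rightarrow> nat \<Rightarrow> nat \<Rightarrow> real"
type_synonym svec = "nat \<Rightarrow> nat \<Rightarrow> real"

text \<open>Boundary matrix E = t_R t_R^T - t_L t_L^T = diag(-1,0,...,0,1).\<close>
definition bdry_E :: "nat \<Rightarrow> rmat" where
  "bdry_E n i j = (if i = j \<and> i = n then 1 else 0) - (if i = j \<and> i = 0 then 1 else 0)"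

text \<open>D = H^{-1} Q for diagonal H.\<close>
definition sbp_D :: "rmat \<Rightarrow> rmat \<Rightarrow> rmat" where
  "sbp_D H Q i j = Q i j / H i i"

definition is_sbp :: "nat \<Rightarrow> nat \<Rightarrow> (nat \<Rightarrow> real) \<Rightarrow> rmat \<Rightarrow> rmat \<Rightarrow> bool" where
  "is_sbp n p x H Q \<longleftrightarrow>
     (\<forall>i<n. x i < x (Suc i)) \<and>
     (\<forall>i\<le>n. \<forall>j\<le>n. H i j = H j i) \<and>
     (\<forall>i\<le>n. \<forall>j\<le>n. i \<noteq> j \<longrightarrow> H i j = 0) \<and>
     (\<forall>i\<le>n. 0 < H i i) \<and>
     (\<forall>i\<le>n. \<forall>j\<le>n. Q i j + Q j i = bdry_E n i j) \<and>
     (\<forall>k\<le>p. \<forall>i\<le>n. (\<Sum>j\<le>n. sbp_D H Q i j * x j ^ k) = of_nat k * x i ^ (k - 1))"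

definition sbp_S :: "nat \<Rightarrow> rmat \<Rightarrow> rmat" where
  "sbp_S n Q i j = Q i j - bdry_E n i j / 2"

text \<open>The 3x3 block matrix tilde Q^G_x: entry (block e, row j ; block e', column l).
  Diagonal blocks S_x; blocks (1,2),(2,3),(3,1) = t_R t_L^T / 2;
  blocks (2,1),(3,2),(1,3) = - t_L t_R^T / 2 (blocks numbered 0,1,2 here).\<close>
definition QG :: "nat \<Rightarrow> rmat \<Rightarrow> nat \<Rightarrow> nat \<Rightarrow> nat \<Rightarrow> nat \<Rightarrow> real" where
  "QG nx Qx e j e' l =
     (if e' = e then sbp_S nx Qx j l else 0)
   + (if e' = (e + 1) mod 3 then (if j = nx \<and> l = 0 then 1/2 else 0) else 0)
   - (if e' = (e + 2) mod 3 then (if j = 0 \<and> l = nx then 1/2 else 0) else 0)"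

text \<open>tilde D_x = I_{n_t} (x) (I_3 (x) H_x^{-1}) tilde Q^G_x, applied to a grid function.\<close>
definition Dx_tilde :: "nat \<Rightarrow> rmat \<Rightarrow> rmat \<Rightarrow> grid \<Rightarrow> grid" where
  "Dx_tilde nx Hx Qx u i e j =
     (\<Sum>e'<3. \<Sum>l\<le>nx. QG nx Qx e j e' l * u i e' l) / Hx j j"

text \<open>D_t = bar D_t (x) I_3 (x) I_nx.\<close>
definition Dt_op :: "nat \<Rightarrow> rmat \<Rightarrow> rmat \<Rightarrow> grid \<Rightarrow> grid" where
  "Dt_op nt Ht Qt u i e j = (\<Sum>l\<le>nt. sbp_D Ht Qt i l * u l e j)"

text \<open>H_t^{-1} t_B t_B^T (u - u(0)), with u(0) the initial data (a spatial vector).\<close>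
definition SAT :: "rmat \<Rightarrow> grid \<Rightarrow> svec \<Rightarrow> grid" where
  "SAT Ht u u0 i e j = (if i = 0 then (u 0 e j - u0 e j) / Ht 0 0 else 0)"

definition kinetic_scheme ::
  "nat \<Rightarrow> nat \<Rightarrow> rmat \<Rightarrow> rmat \<Rightarrow> rmat \<Rightarrow> rmat \<Rightarrow> nat \<Rightarrow> (nat \<Rightarrow> real) \<Rightarrow> (nat \<Rightarrow> real)
   \<Rightarrow> real \<Rightarrow> real \<Rightarrow> real \<Rightarrow> grid \<Rightarrow> (nat \<Rightarrow> grid) \<Rightarrow> svec \<Rightarrow> (nat \<Rightarrow> svec) \<Rightarrow> bool" where
  "kinetic_scheme nt nx Ht Qt Hx Qx nv v \<omega> \<sigma>s \<sigma>a \<epsilon> \<rho> g \<rho>0 g0 \<longleftrightarrow>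
    (\<forall>i\<le>nt. \<forall>e<3. \<forall>j\<le>nx.
      Dt_op nt Ht Qt \<rho> i e j
        + Dx_tilde nx Hx Qx (\<lambda>i' e' j'. \<Sum>k<nv. \<omega> k * v k * g k i' e' j') i e j
      = - \<sigma>a * \<rho> i e j - SAT Ht \<rho> \<rho>0 i e j
     \<and> (\<forall>k<nv.
      Dt_op nt Ht Qt (g k) i e j
        + v k / \<epsilon> * Dx_tilde nx Hx Qx (g k) i e j
        - 1 / \<epsilon> * (\<Sum>k'<nv. \<omega> k' * v k' * Dx_tilde nx Hx Qx (g k') i e j)
        + v k / \<epsilon>\<^sup>2 * Dx_tilde nx Hx Qx \<rho> i e j
      = - (\<sigma>s / \<epsilon>\<^sup>2 + \<sigma>a) * g k i e j - SAT Ht (g k) (g0 k) i e j))"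

definition limit_scheme ::
  "nat \<Rightarrow> nat \<Rightarrow> rmat \<Rightarrow> rmat \<Rightarrow> rmat \<Rightarrow> rmat \<Rightarrow> nat \<Rightarrow> (nat \<Rightarrow> real) \<Rightarrow> (nat \<Rightarrow> real)
   \<Rightarrow> real \<Rightarrow> real \<Rightarrow> grid \<Rightarrow> svec \<Rightarrow> bool" where
  "limit_scheme nt nx Ht Qt Hx Qx nv v \<omega> \<sigma>s \<sigma>a \<rho> \<rho>0 \<longleftrightarrow>
    (\<forall>i\<le>nt. \<forall>e<3. \<forall>j\<le>nx.
      Dt_op nt Ht Qt \<rho> i e j
      = Dx_tilde nx Hx Qx (\<lambda>i' e' j'. (\<Sum>k<nv. \<omega> k * v k ^ 2) / \<sigma>s
                                        * Dx_tilde nx Hx Qx \<rho> i' e' j') i e j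
        - \<sigma>a * \<rho> i e j - SAT Ht \<rho> \<rho>0 i e j)"

definition senergy :: "nat \<Rightarrow> rmat \<Rightarrow> svec \<Rightarrow> real" where
  "senergy nx Hx w = (\<Sum>e<3. \<Sum>j\<le>nx. Hx j j * (w e j)\<^sup>2)"

definition epoly :: "nat \<Rightarrow> nat \<Rightarrow> (nat \<Rightarrow> nat \<Rightarrow> nat \<Rightarrow> real) \<Rightarrow> nat \<Rightarrow> real \<Rightarrow> real \<Rightarrow> real" where
  "epoly pt px a e s y = (\<Sum>ii\<le>pt. \<Sum>jj\<le>px. a e ii jj * s ^ ii * y ^ jj)"

end

theory Submission
  imports Defs "HOL-Computational_Algebra.Polynomial"
begin

(* Limit: multiplying the k-th micro equation by eps^2 and using that g stays bounded gives
   g_k -> -(v_k / sigma_s) Dx rho as eps -> 0, so the flux <v g> in the macro equation tends to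
   -(<v^2> / sigma_s) Dx rho, which is the limit scheme.

   Consistency: on element-wise polynomials that are C^1 across the periodic interfaces, the
   interface couplings of QG cancel the boundary part of S_x, so Dx acts on each element as the
   one-element operator D_x, which differentiates polynomials of degree <= p_x exactly.

   Stability: in the inner product of H_t (x) I_3 (x) H_x, the SBP property Q_t + Q_t^T = E_t turns
   <rho, D_t rho> into (|rho(T)|^2 - |rho(0)|^2) / 2, Dx is skew-adjoint because QG is
   skew-symmetric on the periodic mesh, so the diffusion term contributes
   -(<v^2> / sigma_s) |Dx rho|^2 <= 0, and <rho, SAT> = (|rho(0)|^2 - |rho0|^2 + |rho(0) - rho0|^2) / 2
   enters with a minus sign; together these leave |rho(T)|^2 <= |rho0|^2. *)

lemma Dt_op_scale: "Dt_op nt Ht Qt (\<lambda>i e j. c * u i e j) i e j = c * Dt_op nt Ht Qt u i e j"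
  unfolding Dt_op_def by (simp add: sum_distrib_left algebra_simps)

lemma Dx_tilde_scale: "Dx_tilde nx Hx Qx (\<lambda>i e j. c * u i e j) i e j = c * Dx_tilde nx Hx Qx u i e j"
  unfolding Dx_tilde_def by (simp add: sum_distrib_left algebra_simps)

lemma Dx_tilde_uminus: "Dx_tilde nx Hx Qx (\<lambda>i e j. - u i e j) i e j = - Dx_tilde nx Hx Qx u i e j"
  using Dx_tilde_scale[where c = "-1"] by simp

lemma SAT_scale: "SAT Ht (\<lambda>i e j. c * u i e j) (\<lambda>e j. c * u0 e j) i e j = c * SAT Ht u u0 i e j"
  unfolding SAT_def by (simp add: algebra_simps)

lemma tendsto_Dt_op:
  assumes "\<forall>l\<le>nt. ((\<lambda>x. u x l e j) \<longlongrightarrow> U l e j) F"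
  shows "((\<lambda>x. Dt_op nt Ht Qt (u x) i e j) \<longlongrightarrow> Dt_op nt Ht Qt U i e j) F"
  unfolding Dt_op_def using assms by (intro tendsto_intros) auto

lemma tendsto_Dx_tilde:
  assumes "\<forall>e'<3. \<forall>l\<le>nx. ((\<lambda>x. u x i e' l) \<longlongrightarrow> U i e' l) F"
  shows "((\<lambda>x. Dx_tilde nx Hx Qx (u x) i e j) \<longlongrightarrow> Dx_tilde nx Hx Qx U i e j) F"
  unfolding Dx_tilde_def divide_inverse using assms by (intro tendsto_intros) auto

lemma tendsto_SAT:
  assumes "((\<lambda>x. u x 0 e j) \<longlongrightarrow> U 0 e j) F" and "((\<lambda>x. u0 x e j) \<longlongrightarrow> U0 e j) F"
  shows "((\<lambda>x. SAT Ht (u x) (u0 x) i e j) \<longlongrightarrow> SAT Ht U U0 i e j) F"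
  unfolding SAT_def divide_inverse using assms by (simp add: tendsto_diff tendsto_mult_right)


section \<open>Summation by parts\<close>

lemma sum_bdry_E_row: "j \<le> n \<Longrightarrow> (\<Sum>l\<le>n. bdry_E n j l * r l) = bdry_E n j j * r j"
  by (rule sum.mono_neutral_right[where S = "{j}", simplified]) (auto simp: bdry_E_def)

lemma sbp_quadratic_form:
  assumes "\<forall>i\<le>n. \<forall>j\<le>n. Q i j + Q j i = bdry_E n i j"
  shows "2 * (\<Sum>i\<le>n. \<Sum>l\<le>n. r i * Q i l * r l) = (r n)\<^sup>2 - (r 0)\<^sup>2"
proof -
  let ?S = "\<Sum>i\<le>n. \<Sum>l\<le>n. r i * Q i l * r l"
  have "?S = (\<Sum>i\<le>n. \<Sum>l\<le>n. r i * Q l i * r l)"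
    by (subst sum.swap) (simp add: mult_ac)
  then have "2 * ?S = (\<Sum>i\<le>n. \<Sum>l\<le>n. r i * (Q i l + Q l i) * r l)"
    by (simp add: ring_distribs sum.distrib)
  also have "\<dots> = (\<Sum>i\<le>n. r i * (\<Sum>l\<le>n. bdry_E n i l * r l))"
    using assms by (simp add: sum_distrib_left mult.assoc)
  also have "\<dots> = (\<Sum>i\<le>n. (if i = n then (r i)\<^sup>2 else 0) - (if i = 0 then (r i)\<^sup>2 else 0))"
  proof (intro sum.cong refl)
    fix i assume "i \<in> {..n}"
    with sum_bdry_E_row[of i n r]
    show "r i * (\<Sum>l\<le>n. bdry_E n i l * r l) = (if i = n then (r i)\<^sup>2 else 0) - (if i = 0 then (r i)\<^sup>2 else 0)"
      by (simp add: bdry_E_def power2_eq_square)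
  qed
  also have "\<dots> = (r n)\<^sup>2 - (r 0)\<^sup>2"
    by (simp add: sum_subtractf)
  finally show ?thesis .
qed

lemma QG_skew:
  assumes "\<forall>j\<le>nx. \<forall>l\<le>nx. Qx j l + Qx l j = bdry_E nx j l"
    and "e < 3" "e' < 3" "j \<le> nx" "l \<le> nx"
  shows "QG nx Qx e j e' l = - QG nx Qx e' l e j"
proof -
  have "Qx j l + Qx l j = bdry_E nx j l" "bdry_E nx j l = bdry_E nx l j"
    using assms(1,4,5) by (auto simp: bdry_E_def)
  then have "sbp_S nx Qx j l = - sbp_S nx Qx l j"
    unfolding sbp_S_def by simp
  moreover have "e = 0 \<or> e = 1 \<or> e = 2" "e' = 0 \<or> e' = 1 \<or> e' = 2"
    using assms(2,3) by auto
  ultimately show ?thesis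
    unfolding QG_def by (elim disjE) simp_all
qed

lemma skew_bilinear_form:
  fixes M :: "'a \<Rightarrow> 'b \<Rightarrow> 'a \<Rightarrow> 'b \<Rightarrow> real"
  assumes skew: "\<And>a b c d. a \<in> A \<Longrightarrow> b \<in> B \<Longrightarrow> c \<in> A \<Longrightarrow> d \<in> B \<Longrightarrow> M a b c d = - M c d a b"
  shows "(\<Sum>a\<in>A. \<Sum>b\<in>B. r a b * (\<Sum>c\<in>A. \<Sum>d\<in>B. M a b c d * w c d))
    = - (\<Sum>c\<in>A. \<Sum>d\<in>B. (\<Sum>a\<in>A. \<Sum>b\<in>B. M c d a b * r a b) * w c d)"
proof -
  have "(\<Sum>a\<in>A. \<Sum>b\<in>B. r a b * (\<Sum>c\<in>A. \<Sum>d\<in>B. M a b c d * w c d))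
      = (\<Sum>a\<in>A. \<Sum>b\<in>B. \<Sum>c\<in>A. \<Sum>d\<in>B. r a b * M a b c d * w c d)"
    by (simp add: sum_distrib_left mult.assoc)
  also have "\<dots> = (\<Sum>a\<in>A. \<Sum>c\<in>A. \<Sum>b\<in>B. \<Sum>d\<in>B. r a b * M a b c d * w c d)"
    by (rule sum.cong[OF refl], rule sum.swap)
  also have "\<dots> = (\<Sum>c\<in>A. \<Sum>a\<in>A. \<Sum>d\<in>B. \<Sum>b\<in>B. r a b * M a b c d * w c d)"
    by (subst sum.swap) (rule sum.cong[OF refl], rule sum.cong[OF refl], rule sum.swap)
  also have "\<dots> = (\<Sum>c\<in>A. \<Sum>d\<in>B. \<Sum>a\<in>A. \<Sum>b\<in>B. r a b * M a b c d * w c d)"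
    by (rule sum.cong[OF refl], rule sum.swap)
  also have "\<dots> = (\<Sum>c\<in>A. \<Sum>d\<in>B. \<Sum>a\<in>A. \<Sum>b\<in>B. - (M c d a b * r a b * w c d))"
  proof (intro sum.cong refl)
    fix c d a b assume "c \<in> A" "d \<in> B" "a \<in> A" "b \<in> B"
    then show "r a b * M a b c d * w c d = - (M c d a b * r a b * w c d)"
      by (simp add: skew[of a b c d])
  qed
  also have "\<dots> = - (\<Sum>c\<in>A. \<Sum>d\<in>B. (\<Sum>a\<in>A. \<Sum>b\<in>B. M c d a b * r a b) * w c d)"
    by (simp add: sum_distrib_right sum_negf)
  finally show ?thesis .
qed

lemma H_times_Dx_tilde:
  "Hx j j \<noteq> 0 \<Longrightarrow> Hx j j * Dx_tilde nx Hx Qx u i e j = (\<Sum>e'<3. \<Sum>l\<le>nx. QG nx Qx e j e' l * u i e' l)"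
  unfolding Dx_tilde_def by simp

lemma Dx_tilde_skew_adjoint:
  assumes "\<forall>j\<le>nx. 0 < Hx j j" and "\<forall>j\<le>nx. \<forall>l\<le>nx. Qx j l + Qx l j = bdry_E nx j l"
  shows "(\<Sum>e<3. \<Sum>j\<le>nx. Hx j j * r i e j * Dx_tilde nx Hx Qx w i e j)
       = - (\<Sum>e<3. \<Sum>j\<le>nx. Hx j j * Dx_tilde nx Hx Qx r i e j * w i e j)"
proof -
  have H: "Hx j j \<noteq> 0" if "j \<in> {..nx}" for j
    using assms(1) that by auto
  have "(\<Sum>e<3. \<Sum>j\<le>nx. Hx j j * r i e j * Dx_tilde nx Hx Qx w i e j)
      = (\<Sum>e<3. \<Sum>j\<le>nx. r i e j * (\<Sum>e'<3. \<Sum>l\<le>nx. QG nx Qx e j e' l * w i e' l))"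
  proof (intro sum.cong refl)
    fix e j assume "j \<in> {..nx}"
    from H_times_Dx_tilde[of Hx j, OF H[OF this]]
    show "Hx j j * r i e j * Dx_tilde nx Hx Qx w i e j
        = r i e j * (\<Sum>e'<3. \<Sum>l\<le>nx. QG nx Qx e j e' l * w i e' l)"
      by (simp add: mult_ac)
  qed
  also have "\<dots> = - (\<Sum>e'<3. \<Sum>l\<le>nx. (\<Sum>e<3. \<Sum>j\<le>nx. QG nx Qx e' l e j * r i e j) * w i e' l)"
    by (intro skew_bilinear_form QG_skew[OF assms(2)]) auto
  also have "\<dots> = - (\<Sum>e<3. \<Sum>j\<le>nx. Hx j j * Dx_tilde nx Hx Qx r i e j * w i e j)"
    using H by (simp add: H_times_Dx_tilde)
  finally show ?thesis .
qed


section \<open>Energy stability of the limit scheme\<close>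

definition st_inner :: "nat \<Rightarrow> nat \<Rightarrow> rmat \<Rightarrow> rmat \<Rightarrow> grid \<Rightarrow> grid \<Rightarrow> real" where
  "st_inner nt nx Ht Hx u w = (\<Sum>i\<le>nt. \<Sum>e<3. \<Sum>j\<le>nx. Ht i i * Hx j j * u i e j * w i e j)"

lemma st_inner_diff:
  "st_inner nt nx Ht Hx u (\<lambda>i e j. a i e j - b i e j) = st_inner nt nx Ht Hx u a - st_inner nt nx Ht Hx u b"
  unfolding st_inner_def by (simp add: right_diff_distrib sum_subtractf)

lemma st_inner_scaled_self_nonneg:
  assumes "\<forall>i\<le>nt. 0 < Ht i i" "\<forall>j\<le>nx. 0 < Hx j j" "0 \<le> c"
  shows "0 \<le> st_inner nt nx Ht Hx w (\<lambda>i e j. c * w i e j)"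
  unfolding st_inner_def
proof (intro sum_nonneg)
  fix i e j assume "i \<in> {..nt}" "j \<in> {..nx}"
  with assms have "0 < Ht i i" "0 < Hx j j"
    by auto
  with \<open>0 \<le> c\<close> have "0 \<le> Ht i i * Hx j j * c * (w i e j)\<^sup>2"
    by simp
  then show "0 \<le> Ht i i * Hx j j * w i e j * (c * w i e j)"
    by (simp add: power2_eq_square mult_ac)
qed

lemma senergy_nonneg: "\<forall>j\<le>nx. 0 < Hx j j \<Longrightarrow> 0 \<le> senergy nx Hx w"
  unfolding senergy_def by (intro sum_nonneg) (simp add: less_imp_le)

lemma st_inner_Dt_op:
  assumes "\<forall>i\<le>nt. 0 < Ht i i" and "\<forall>i\<le>nt. \<forall>l\<le>nt. Qt i l + Qt l i = bdry_E nt i l"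
  shows "2 * st_inner nt nx Ht Hx u (Dt_op nt Ht Qt u) = senergy nx Hx (u nt) - senergy nx Hx (u 0)"
proof -
  have Ht: "Ht i i \<noteq> 0" if "i \<le> nt" for i
    using assms(1) that by auto
  have "st_inner nt nx Ht Hx u (Dt_op nt Ht Qt u)
      = (\<Sum>i\<le>nt. \<Sum>e<3. \<Sum>j\<le>nx. Hx j j * (\<Sum>l\<le>nt. u i e j * Qt i l * u l e j))"
    unfolding st_inner_def Dt_op_def sbp_D_def
    by (intro sum.cong refl) (simp add: Ht sum_distrib_left mult_ac)
  also have "\<dots> = (\<Sum>e<3. \<Sum>j\<le>nx. \<Sum>i\<le>nt. Hx j j * (\<Sum>l\<le>nt. u i e j * Qt i l * u l e j))"
    by (subst sum.swap) (rule sum.cong[OF refl], rule sum.swap)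
  finally have "2 * st_inner nt nx Ht Hx u (Dt_op nt Ht Qt u)
      = (\<Sum>e<3. \<Sum>j\<le>nx. Hx j j * (2 * (\<Sum>i\<le>nt. \<Sum>l\<le>nt. u i e j * Qt i l * u l e j)))"
    by (simp add: sum_distrib_left mult_ac)
  also have "\<dots> = (\<Sum>e<3. \<Sum>j\<le>nx. Hx j j * ((u nt e j)\<^sup>2 - (u 0 e j)\<^sup>2))"
    by (simp only: sbp_quadratic_form[OF assms(2)])
  also have "\<dots> = senergy nx Hx (u nt) - senergy nx Hx (u 0)"
    unfolding senergy_def by (simp add: right_diff_distrib sum_subtractf)
  finally show ?thesis .
qed

lemma st_inner_SAT:
  assumes "Ht 0 0 \<noteq> 0"
  shows "2 * st_inner nt nx Ht Hx u (SAT Ht u u0)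
    = senergy nx Hx (u 0) - senergy nx Hx u0 + senergy nx Hx (\<lambda>e j. u 0 e j - u0 e j)"
proof -
  have "st_inner nt nx Ht Hx u (SAT Ht u u0) = (\<Sum>e<3. \<Sum>j\<le>nx. Hx j j * (u 0 e j * (u 0 e j - u0 e j)))"
    unfolding st_inner_def SAT_def using assms
    by (simp add: sum.atMost_shift[of _ nt] if_distrib cong: if_cong)
  then show ?thesis
    unfolding senergy_def
    by (simp add: sum_distrib_left power2_eq_square algebra_simps flip: sum.distrib sum_subtractf)
qed

lemma st_inner_Dx_tilde:
  assumes "\<forall>j\<le>nx. 0 < Hx j j" and "\<forall>j\<le>nx. \<forall>l\<le>nx. Qx j l + Qx l j = bdry_E nx j l"
  shows "st_inner nt nx Ht Hx u (Dx_tilde nx Hx Qx w) = - st_inner nt nx Ht Hx (Dx_tilde nx Hx Qx u) w"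
proof -
  have "st_inner nt nx Ht Hx u (Dx_tilde nx Hx Qx w)
      = (\<Sum>i\<le>nt. Ht i i * (\<Sum>e<3. \<Sum>j\<le>nx. Hx j j * u i e j * Dx_tilde nx Hx Qx w i e j))"
    unfolding st_inner_def by (simp add: sum_distrib_left mult.assoc)
  also have "\<dots> = (\<Sum>i\<le>nt. Ht i i * - (\<Sum>e<3. \<Sum>j\<le>nx. Hx j j * Dx_tilde nx Hx Qx u i e j * w i e j))"
    by (simp only: Dx_tilde_skew_adjoint[where Hx = Hx and Qx = Qx, OF assms])
  also have "\<dots> = - st_inner nt nx Ht Hx (Dx_tilde nx Hx Qx u) w"
    unfolding st_inner_def by (simp add: sum_distrib_left sum_negf mult.assoc)
  finally show ?thesis .
qed

lemma limit_scheme_energy_stable: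
  assumes sbp_t: "is_sbp nt pt tn Ht Qt" and sbp_x: "is_sbp nx px xn Hx Qx"
    and c_nonneg: "0 \<le> (\<Sum>k<nv. \<omega> k * v k ^ 2) / \<sigma>s" and sig_a: "0 \<le> \<sigma>a"
    and scheme: "limit_scheme nt nx Ht Qt Hx Qx nv v \<omega> \<sigma>s \<sigma>a \<rho> \<rho>0"
  shows "senergy nx Hx (\<rho> nt) \<le> senergy nx Hx \<rho>0"
proof -
  define c where "c = (\<Sum>k<nv. \<omega> k * v k ^ 2) / \<sigma>s"
  define w where "w = (\<lambda>i e j. c * Dx_tilde nx Hx Qx \<rho> i e j)"
  let ?inner = "st_inner nt nx Ht Hx" and ?E = "senergy nx Hx"
  have Ht: "\<forall>i\<le>nt. 0 < Ht i i" and Qt: "\<forall>i\<le>nt. \<forall>l\<le>nt. Qt i l + Qt l i = bdry_E nt i l"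
    using sbp_t unfolding is_sbp_def by auto
  have Hx: "\<forall>j\<le>nx. 0 < Hx j j" and Qx: "\<forall>j\<le>nx. \<forall>l\<le>nx. Qx j l + Qx l j = bdry_E nx j l"
    using sbp_x unfolding is_sbp_def by auto
  have "?inner \<rho> (Dt_op nt Ht Qt \<rho>)
      = ?inner \<rho> (\<lambda>i e j. Dx_tilde nx Hx Qx w i e j - \<sigma>a * \<rho> i e j - SAT Ht \<rho> \<rho>0 i e j)"
    using scheme unfolding st_inner_def limit_scheme_def w_def c_def by (intro sum.cong refl) auto
  then have "?inner \<rho> (Dt_op nt Ht Qt \<rho>)
      = - ?inner (Dx_tilde nx Hx Qx \<rho>) w - ?inner \<rho> (\<lambda>i e j. \<sigma>a * \<rho> i e j) - ?inner \<rho> (SAT Ht \<rho> \<rho>0)"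
    by (simp add: st_inner_diff st_inner_Dx_tilde[where Hx = Hx and Qx = Qx, OF Hx Qx])
  moreover have "2 * ?inner \<rho> (Dt_op nt Ht Qt \<rho>) = ?E (\<rho> nt) - ?E (\<rho> 0)"
    using Ht Qt by (rule st_inner_Dt_op)
  moreover have "0 \<le> ?inner (Dx_tilde nx Hx Qx \<rho>) w" "0 \<le> ?inner \<rho> (\<lambda>i e j. \<sigma>a * \<rho> i e j)"
    using Ht Hx c_nonneg sig_a unfolding w_def c_def[symmetric] by (simp_all add: st_inner_scaled_self_nonneg)
  moreover have "2 * ?inner \<rho> (SAT Ht \<rho> \<rho>0) = ?E (\<rho> 0) - ?E \<rho>0 + ?E (\<lambda>e j. \<rho> 0 e j - \<rho>0 e j)"
    using Ht by (intro st_inner_SAT) auto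
  moreover have "0 \<le> ?E (\<lambda>e j. \<rho> 0 e j - \<rho>0 e j)"
    using Hx by (rule senergy_nonneg)
  ultimately show ?thesis
    by linarith
qed

section \<open>Consistency of the limit scheme\<close>

lemma poly_pderiv_eq_sum:
  fixes q :: "real poly"
  assumes "degree q \<le> p"
  shows "poly (pderiv q) y = (\<Sum>k\<le>p. coeff q k * (of_nat k * y ^ (k - 1)))"
proof -
  have "poly q = (\<lambda>y. \<Sum>k\<le>p. coeff q k * y ^ k)"
    by (subst poly_as_sum_of_monoms'[OF assms, symmetric]) (simp add: poly_sum poly_monom fun_eq_iff)
  moreover have "((\<lambda>y. \<Sum>k\<le>p. coeff q k * y ^ k)
      has_real_derivative (\<Sum>k\<le>p. coeff q k * (of_nat k * y ^ (k - 1)))) (at y)"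
    by (intro DERIV_sum DERIV_cmult) (simp add: DERIV_pow)
  ultimately show ?thesis
    using DERIV_unique[OF poly_DERIV] by metis
qed

lemma sbp_D_exact_poly:
  assumes sbp: "is_sbp n p x H Q" and deg: "degree q \<le> p" and i: "i \<le> n"
  shows "(\<Sum>j\<le>n. sbp_D H Q i j * poly q (x j)) = poly (pderiv q) (x i)"
proof -
  have exact: "(\<Sum>j\<le>n. sbp_D H Q i j * x j ^ k) = of_nat k * x i ^ (k - 1)" if "k \<le> p" for k
    using sbp i that unfolding is_sbp_def by blast
  have "(\<Sum>j\<le>n. sbp_D H Q i j * poly q (x j)) = (\<Sum>j\<le>n. \<Sum>k\<le>p. sbp_D H Q i j * (coeff q k * x j ^ k))"
    by (subst poly_as_sum_of_monoms'[OF deg, symmetric]) (simp add: poly_sum poly_monom sum_distrib_left)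
  also have "\<dots> = (\<Sum>k\<le>p. coeff q k * (\<Sum>j\<le>n. sbp_D H Q i j * x j ^ k))"
    by (subst sum.swap) (simp add: sum_distrib_left mult_ac)
  also have "\<dots> = poly (pderiv q) (x i)"
    by (simp add: exact poly_pderiv_eq_sum[OF deg])
  finally show ?thesis .
qed

lemma sum_atMost_indicator_mult:
  "k \<le> (n::nat) \<Longrightarrow> (\<Sum>l\<le>n. (if P \<and> l = k then c else 0) * f l) = (if P then c * f k else (0::real))"
  by (cases P) (simp_all add: mult_delta_left)

lemma QG_row:
  assumes "e < 3"
  shows "(\<Sum>e'<3. \<Sum>l\<le>nx. QG nx Qx e j e' l * u e' l)
    = (\<Sum>l\<le>nx. sbp_S nx Qx j l * u e l)
      + (if j = nx then u ((e + 1) mod 3) 0 / 2 else 0) - (if j = 0 then u ((e + 2) mod 3) nx / 2 else 0)"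
proof -
  have "(\<Sum>l\<le>nx. QG nx Qx e j e' l * u e' l)
    = (if e' = e then \<Sum>l\<le>nx. sbp_S nx Qx j l * u e' l else 0)
      + (if e' = (e + 1) mod 3 then (if j = nx then u e' 0 / 2 else 0) else 0)
      - (if e' = (e + 2) mod 3 then (if j = 0 then u e' nx / 2 else 0) else 0)" for e'
    by (simp add: QG_def ring_distribs sum.distrib sum_subtractf sum_atMost_indicator_mult)
  then show ?thesis
    using assms by (simp add: sum.distrib sum_subtractf)
qed

lemma Dx_tilde_interface_continuous:
  assumes H: "Hx j j \<noteq> 0" and e: "e < 3" and j: "j \<le> nx"
    and cont: "\<forall>e<3. u i ((e + 1) mod 3) 0 = u i e nx"
  shows "Dx_tilde nx Hx Qx u i e j = (\<Sum>l\<le>nx. sbp_D Hx Qx j l * u i e l)"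
proof -
  have "((e + 2) mod 3 + 1) mod 3 = e"
    using e by presburger
  then have interface: "u i ((e + 1) mod 3) 0 = u i e nx" "u i ((e + 2) mod 3) nx = u i e 0"
    using cont e by (metis mod_less_divisor zero_less_numeral)+
  have "Hx j j * Dx_tilde nx Hx Qx u i e j = (\<Sum>l\<le>nx. sbp_S nx Qx j l * u i e l)
      + (if j = nx then u i e nx / 2 else 0) - (if j = 0 then u i e 0 / 2 else 0)"
    unfolding H_times_Dx_tilde[of Hx j, OF H] QG_row[OF e] interface ..
  also have "\<dots> = (\<Sum>l\<le>nx. Qx j l * u i e l)"
  proof -
    have "(\<Sum>l\<le>nx. sbp_S nx Qx j l * u i e l) = (\<Sum>l\<le>nx. Qx j l * u i e l) - bdry_E nx j j * u i e j / 2"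
      unfolding sbp_S_def using sum_bdry_E_row[OF j, of "u i e"]
      by (simp add: left_diff_distrib sum_subtractf flip: sum_divide_distrib)
    then show ?thesis
      by (simp add: bdry_E_def)
  qed
  finally show ?thesis
    using H unfolding sbp_D_def by (simp add: field_simps flip: sum_divide_distrib)
qed

lemma Dx_tilde_exact_poly:
  assumes sbp: "is_sbp nx px xn Hx Qx"
    and deg: "\<forall>e<3. degree (q e) \<le> px"
    and cont: "\<forall>e<3. poly (q e) (xn nx) = poly (q ((e + 1) mod 3)) (xn 0)"
    and u: "\<forall>e<3. \<forall>l\<le>nx. u i e l = poly (q e) (xn l)"
    and e: "e < 3" and j: "j \<le> nx"
  shows "Dx_tilde nx Hx Qx u i e j = poly (pderiv (q e)) (xn j)"
proof -
  have "0 < Hx j j"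
    using sbp j unfolding is_sbp_def by blast
  moreover have "\<forall>e<3. u i ((e + 1) mod 3) 0 = u i e nx"
  proof (intro allI impI)
    fix e' :: nat assume "e' < 3"
    have "u i ((e' + 1) mod 3) 0 = poly (q ((e' + 1) mod 3)) (xn 0)"
      using u by simp
    also have "\<dots> = u i e' nx"
      using u cont \<open>e' < 3\<close> by simp
    finally show "u i ((e' + 1) mod 3) 0 = u i e' nx" .
  qed
  ultimately have "Dx_tilde nx Hx Qx u i e j = (\<Sum>l\<le>nx. sbp_D Hx Qx j l * u i e l)"
    using e j by (simp add: Dx_tilde_interface_continuous)
  also have "\<dots> = (\<Sum>l\<le>nx. sbp_D Hx Qx j l * poly (q e) (xn l))"
    using u e by (intro sum.cong refl) simp
  also have "\<dots> = poly (pderiv (q e)) (xn j)"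
    using deg e by (intro sbp_D_exact_poly[OF sbp _ j]) simp
  finally show ?thesis .
qed

definition epoly_in_x :: "nat \<Rightarrow> nat \<Rightarrow> (nat \<Rightarrow> nat \<Rightarrow> nat \<Rightarrow> real) \<Rightarrow> nat \<Rightarrow> real \<Rightarrow> real poly" where
  "epoly_in_x pt px a e s = (\<Sum>jj\<le>px. monom (\<Sum>ii\<le>pt. a e ii jj * s ^ ii) jj)"

definition epoly_in_t :: "nat \<Rightarrow> nat \<Rightarrow> (nat \<Rightarrow> nat \<Rightarrow> nat \<Rightarrow> real) \<Rightarrow> nat \<Rightarrow> real \<Rightarrow> real poly" where
  "epoly_in_t pt px a e y = (\<Sum>ii\<le>pt. monom (\<Sum>jj\<le>px. a e ii jj * y ^ jj) ii)"

lemma poly_epoly_in_x: "poly (epoly_in_x pt px a e s) = epoly pt px a e s"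
  unfolding epoly_in_x_def epoly_def
  by (rule ext) (simp add: poly_sum poly_monom sum_distrib_right sum.swap[of _ "{..pt}"])

lemma poly_epoly_in_t: "poly (epoly_in_t pt px a e y) = (\<lambda>s. epoly pt px a e s y)"
  unfolding epoly_in_t_def epoly_def
  by (rule ext) (simp add: poly_sum poly_monom sum_distrib_left sum_distrib_right mult_ac)

lemma degree_epoly_in_x: "degree (epoly_in_x pt px a e s) \<le> px"
  unfolding epoly_in_x_def by (intro degree_sum_le) (auto intro: order_trans[OF degree_monom_le])

lemma degree_epoly_in_t: "degree (epoly_in_t pt px a e y) \<le> pt"
  unfolding epoly_in_t_def by (intro degree_sum_le) (auto intro: order_trans[OF degree_monom_le])

lemma deriv_poly: "deriv (poly p) = poly (pderiv (p :: real poly))"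
  by (rule ext, rule DERIV_imp_deriv) (rule poly_DERIV)

lemma limit_scheme_consistent:
  assumes sbp_t: "is_sbp nt pt tn Ht Qt" and sbp_x: "is_sbp nx px xn Hx Qx"
    and C1: "\<forall>e<3. \<forall>s.
            epoly pt px a e s (xn nx) = epoly pt px a ((e + 1) mod 3) s (xn 0)
          \<and> deriv (epoly pt px a e s) (xn nx) = deriv (epoly pt px a ((e + 1) mod 3) s) (xn 0)"
    and i: "i \<le> nt" and e: "e < 3" and j: "j \<le> nx"
  shows "Dt_op nt Ht Qt (\<lambda>i' e' j'. epoly pt px a e' (tn i') (xn j')) i e j
            - Dx_tilde nx Hx Qx (\<lambda>i' e' j'. c
                 * Dx_tilde nx Hx Qx (\<lambda>i'' e'' j''. epoly pt px a e'' (tn i'') (xn j'')) i' e' j') i e j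
            + \<sigma>a * epoly pt px a e (tn i) (xn j)
            + SAT Ht (\<lambda>i' e' j'. epoly pt px a e' (tn i') (xn j'))
                     (\<lambda>e' j'. epoly pt px a e' (tn 0) (xn j')) i e j
          = deriv (\<lambda>s. epoly pt px a e s (xn j)) (tn i)
            - c * deriv (deriv (epoly pt px a e (tn i))) (xn j)
            + \<sigma>a * epoly pt px a e (tn i) (xn j)"
proof -
  define u where "u = (\<lambda>i' e' j'. epoly pt px a e' (tn i') (xn j'))"
  define P where "P = epoly_in_x pt px a"
  have in_x: "epoly pt px a e' s = poly (P e' s)" for e' s
    unfolding P_def poly_epoly_in_x ..
  have in_t: "(\<lambda>s. epoly pt px a e s y) = poly (epoly_in_t pt px a e y)" for y
    unfolding poly_epoly_in_t ..
  have C1_P: "\<forall>e<3. poly (P e s) (xn nx) = poly (P ((e + 1) mod 3) s) (xn 0)"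
    "\<forall>e<3. poly (pderiv (P e s)) (xn nx) = poly (pderiv (P ((e + 1) mod 3) s)) (xn 0)" for s
    using C1 unfolding in_x deriv_poly by simp_all
  have deg_P: "\<forall>e<3. degree (P e s) \<le> px" for s
    unfolding P_def by (simp add: degree_epoly_in_x)
  have Dx_u: "Dx_tilde nx Hx Qx u i' e' l = poly (pderiv (P e' (tn i'))) (xn l)"
    if "e' < 3" "l \<le> nx" for i' e' l
    using that by (intro Dx_tilde_exact_poly[OF sbp_x deg_P C1_P(1)]) (simp_all add: u_def in_x)
  have "Dx_tilde nx Hx Qx (\<lambda>i' e' j'. c * Dx_tilde nx Hx Qx u i' e' j') i e j
      = poly (pderiv (smult c (pderiv (P e (tn i))))) (xn j)"
  proof (rule Dx_tilde_exact_poly[OF sbp_x _ _ _ e j])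
    show "\<forall>e<3. degree (smult c (pderiv (P e (tn i)))) \<le> px"
      using deg_P by (auto simp: degree_pderiv intro!: order_trans[OF degree_smult_le] order_trans[OF diff_le_self])
  qed (use C1_P(2) Dx_u in simp_all)
  also have "\<dots> = c * deriv (deriv (epoly pt px a e (tn i))) (xn j)"
    unfolding in_x deriv_poly by (simp add: pderiv_smult)
  moreover have "Dt_op nt Ht Qt u i e j = deriv (\<lambda>s. epoly pt px a e s (xn j)) (tn i)"
    unfolding Dt_op_def u_def in_t deriv_poly
    using sbp_D_exact_poly[OF sbp_t degree_epoly_in_t i] by (simp add: poly_epoly_in_t)
  moreover have "SAT Ht u (\<lambda>e' j'. epoly pt px a e' (tn 0) (xn j')) i e j = 0"
    unfolding SAT_def u_def by simp
  ultimately show ?thesis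
    unfolding u_def by simp
qed

section \<open>The formal limit \<open>\<epsilon> \<rightarrow> 0\<close>\<close>

lemma tendsto_mult_bounded_at_right_0:
  fixes f :: "real \<Rightarrow> real"
  assumes "\<forall>\<^sub>F \<epsilon> in at_right 0. \<bar>f \<epsilon>\<bar> \<le> B"
  shows "((\<lambda>\<epsilon>. \<epsilon> * f \<epsilon>) \<longlongrightarrow> 0) (at_right 0)"
proof -
  have "Zfun (\<lambda>\<epsilon>::real. \<epsilon>) (at_right 0)"
    using tendsto_ident_at[of 0 "{0<..}"] tendsto_Zfun_iff[of "\<lambda>\<epsilon>. \<epsilon>" 0 "at_right 0"] by simp
  moreover have "Bfun f (at_right 0)"
    using assms by (intro BfunI) simp
  ultimately show ?thesis
    by (simp add: tendsto_Zfun_iff bounded_bilinear.Zfun_prod_Bfun[OF bounded_bilinear_mult])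
qed

lemma micro_equation_solved_for_g:
  fixes \<epsilon> \<sigma>s \<sigma>a v Dt Dx avg D\<rho> g sat :: real
  assumes "0 < \<epsilon>" "0 < \<sigma>s"
    and "Dt + v / \<epsilon> * Dx - 1 / \<epsilon> * avg + v / \<epsilon>\<^sup>2 * D\<rho> = - (\<sigma>s / \<epsilon>\<^sup>2 + \<sigma>a) * g - sat"
  shows "g = (- v * D\<rho> - \<epsilon> * (\<epsilon> * Dt) - v * (\<epsilon> * Dx) + \<epsilon> * avg
              - \<epsilon> * \<sigma>a * (\<epsilon> * g) - \<epsilon> * (\<epsilon> * sat)) / \<sigma>s"
proof -
  have "\<epsilon>\<^sup>2 * (Dt + v / \<epsilon> * Dx - 1 / \<epsilon> * avg + v / \<epsilon>\<^sup>2 * D\<rho>) = \<epsilon>\<^sup>2 * Dt + \<epsilon> * v * Dx - \<epsilon> * avg + v * D\<rho>"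
    and "\<epsilon>\<^sup>2 * (- (\<sigma>s / \<epsilon>\<^sup>2 + \<sigma>a) * g - sat) = - (\<sigma>s + \<epsilon>\<^sup>2 * \<sigma>a) * g - \<epsilon>\<^sup>2 * sat"
    using assms(1) by (simp_all add: field_simps power2_eq_square)
  with assms(3) have "\<epsilon>\<^sup>2 * Dt + \<epsilon> * v * Dx - \<epsilon> * avg + v * D\<rho> = - (\<sigma>s + \<epsilon>\<^sup>2 * \<sigma>a) * g - \<epsilon>\<^sup>2 * sat"
    by metis
  then show ?thesis
    using assms(2) by (simp add: field_simps power2_eq_square)
qed

context
  fixes nt nx nv :: nat and Ht Qt Hx Qx :: rmat and v \<omega> :: "nat \<Rightarrow> real" and \<sigma>s \<sigma>a :: real
    and \<rho> :: "real \<Rightarrow> grid" and g :: "real \<Rightarrow> nat \<Rightarrow> grid" and \<rho>0 :: svec and g0 :: "nat \<Rightarrow> svec"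
    and \<rho>lim :: grid and B :: real
  assumes sig_s: "0 < \<sigma>s"
    and scheme: "\<forall>\<^sub>F \<epsilon> in at_right 0. kinetic_scheme nt nx Ht Qt Hx Qx nv v \<omega> \<sigma>s \<sigma>a \<epsilon> (\<rho> \<epsilon>) (g \<epsilon>) \<rho>0 g0"
    and \<rho>_lim: "\<forall>i\<le>nt. \<forall>e<3. \<forall>j\<le>nx. ((\<lambda>\<epsilon>. \<rho> \<epsilon> i e j) \<longlongrightarrow> \<rho>lim i e j) (at_right 0)"
    and g_bounded: "\<forall>\<^sub>F \<epsilon> in at_right 0. \<forall>k<nv. \<forall>i\<le>nt. \<forall>e<3. \<forall>j\<le>nx. \<bar>g \<epsilon> k i e j\<bar> \<le> B"
begin

lemma eps_times_g_tendsto_0: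
  assumes "k < nv" "i \<le> nt" "e < 3" "j \<le> nx"
  shows "((\<lambda>\<epsilon>. \<epsilon> * g \<epsilon> k i e j) \<longlongrightarrow> 0) (at_right 0)"
  using g_bounded assms by (intro tendsto_mult_bounded_at_right_0[where B = B]) (auto elim: eventually_mono)

lemma g_tendsto_Dx_tilde_limit:
  assumes k: "k < nv" and i: "i \<le> nt" and e: "e < 3" and j: "j \<le> nx"
  shows "((\<lambda>\<epsilon>. g \<epsilon> k i e j) \<longlongrightarrow> - (v k / \<sigma>s) * Dx_tilde nx Hx Qx \<rho>lim i e j) (at_right 0)"
proof -
  define gs where "gs \<epsilon> k' = (\<lambda>i e j. \<epsilon> * g \<epsilon> k' i e j)" for \<epsilon> k'
  \<comment> \<open>the micro equation times \<open>\<epsilon>\<^sup>2 / \<sigma>s\<close>, solved for \<open>g\<close>: all terms but the first carry a factor \<open>\<epsilon> g\<close>\<close>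
  define R where "R \<epsilon> = (- v k * Dx_tilde nx Hx Qx (\<rho> \<epsilon>) i e j
      - \<epsilon> * Dt_op nt Ht Qt (gs \<epsilon> k) i e j - v k * Dx_tilde nx Hx Qx (gs \<epsilon> k) i e j
      + (\<Sum>k'<nv. \<omega> k' * v k' * Dx_tilde nx Hx Qx (gs \<epsilon> k') i e j)
      - \<epsilon> * \<sigma>a * (\<epsilon> * g \<epsilon> k i e j)
      - \<epsilon> * SAT Ht (gs \<epsilon> k) (\<lambda>e j. \<epsilon> * g0 k e j) i e j) / \<sigma>s" for \<epsilon>
  have gs_0: "((\<lambda>\<epsilon>. gs \<epsilon> k' i' e' j') \<longlongrightarrow> 0) (at_right 0)"
    if "k' < nv" "i' \<le> nt" "e' < 3" "j' \<le> nx" for k' i' e' j'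
    unfolding gs_def using eps_times_g_tendsto_0 that by simp
  have eps_0: "((\<lambda>\<epsilon>::real. \<epsilon>) \<longlongrightarrow> 0) (at_right 0)"
    by (rule tendsto_ident_at)
  have "(R \<longlongrightarrow> (- v k * Dx_tilde nx Hx Qx \<rho>lim i e j
      - 0 * Dt_op nt Ht Qt (\<lambda>i e j. 0) i e j - v k * Dx_tilde nx Hx Qx (\<lambda>i e j. 0) i e j
      + (\<Sum>k'<nv. \<omega> k' * v k' * Dx_tilde nx Hx Qx (\<lambda>i e j. 0) i e j)
      - 0 * \<sigma>a * 0 - 0 * SAT Ht (\<lambda>i e j. 0) (\<lambda>e j. 0) i e j) / \<sigma>s) (at_right 0)"
    unfolding R_def
    by (intro tendsto_intros tendsto_Dt_op tendsto_Dx_tilde tendsto_SAT eps_0 eps_times_g_tendsto_0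
        tendsto_mult_left_zero allI impI gs_0) (use assms \<rho>_lim sig_s in auto)
  moreover have "Dt_op nt Ht Qt (\<lambda>i e j. 0) i e j = 0" "Dx_tilde nx Hx Qx (\<lambda>i e j. 0) i e j = 0"
    by (simp_all add: Dt_op_def Dx_tilde_def)
  ultimately have R_lim: "(R \<longlongrightarrow> - (v k / \<sigma>s) * Dx_tilde nx Hx Qx \<rho>lim i e j) (at_right 0)"
    by simp
  have "\<forall>\<^sub>F \<epsilon> in at_right 0. R \<epsilon> = g \<epsilon> k i e j"
    using scheme eventually_at_right_less[of 0]
  proof eventually_elim
    case (elim \<epsilon>)
    then have "Dt_op nt Ht Qt (g \<epsilon> k) i e j + v k / \<epsilon> * Dx_tilde nx Hx Qx (g \<epsilon> k) i e j
        - 1 / \<epsilon> * (\<Sum>k'<nv. \<omega> k' * v k' * Dx_tilde nx Hx Qx (g \<epsilon> k') i e j)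
        + v k / \<epsilon>\<^sup>2 * Dx_tilde nx Hx Qx (\<rho> \<epsilon>) i e j
      = - (\<sigma>s / \<epsilon>\<^sup>2 + \<sigma>a) * g \<epsilon> k i e j - SAT Ht (g \<epsilon> k) (g0 k) i e j"
      unfolding kinetic_scheme_def using assms by blast
    from micro_equation_solved_for_g[OF \<open>0 < \<epsilon>\<close> sig_s this]
    show ?case
      unfolding R_def gs_def Dt_op_scale Dx_tilde_scale SAT_scale
      by (simp add: sum_distrib_left algebra_simps)
  qed
  with R_lim show ?thesis
    by (rule Lim_transform_eventually)
qed

lemma kinetic_scheme_tendsto_limit_scheme:
  "limit_scheme nt nx Ht Qt Hx Qx nv v \<omega> \<sigma>s \<sigma>a \<rho>lim \<rho>0"
  unfolding limit_scheme_def
proof (intro allI impI)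
  fix i e j :: nat assume i: "i \<le> nt" and e: "e < 3" and j: "j \<le> nx"
  define c where "c = (\<Sum>k<nv. \<omega> k * v k ^ 2) / \<sigma>s"
  have flux_lim: "(\<Sum>k<nv. \<omega> k * v k * (- (v k / \<sigma>s) * D)) = - (c * D)" for D
    unfolding c_def sum_distrib_right sum_divide_distrib sum_negf[symmetric]
    by (simp add: power2_eq_square mult_ac)
  have flux: "((\<lambda>\<epsilon>. \<Sum>k<nv. \<omega> k * v k * g \<epsilon> k i e' l) \<longlongrightarrow> - (c * Dx_tilde nx Hx Qx \<rho>lim i e' l))
      (at_right 0)" if "e' < 3" "l \<le> nx" for e' l
    unfolding flux_lim[symmetric]
    by (intro tendsto_sum tendsto_mult_left g_tendsto_Dx_tilde_limit) (use i that in auto)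
  have lhs: "((\<lambda>\<epsilon>. Dt_op nt Ht Qt (\<rho> \<epsilon>) i e j
        + Dx_tilde nx Hx Qx (\<lambda>i' e' j'. \<Sum>k<nv. \<omega> k * v k * g \<epsilon> k i' e' j') i e j)
      \<longlongrightarrow> Dt_op nt Ht Qt \<rho>lim i e j
        + Dx_tilde nx Hx Qx (\<lambda>i e j. - (c * Dx_tilde nx Hx Qx \<rho>lim i e j)) i e j) (at_right 0)"
    by (intro tendsto_add tendsto_Dt_op tendsto_Dx_tilde allI impI flux) (use \<rho>_lim e j in auto)
  have rhs: "((\<lambda>\<epsilon>. - \<sigma>a * \<rho> \<epsilon> i e j - SAT Ht (\<rho> \<epsilon>) \<rho>0 i e j)
      \<longlongrightarrow> - \<sigma>a * \<rho>lim i e j - SAT Ht \<rho>lim \<rho>0 i e j) (at_right 0)"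
    by (intro tendsto_intros tendsto_SAT) (use \<rho>_lim i e j in auto)
  have "\<forall>\<^sub>F \<epsilon> in at_right 0. - \<sigma>a * \<rho> \<epsilon> i e j - SAT Ht (\<rho> \<epsilon>) \<rho>0 i e j
      = Dt_op nt Ht Qt (\<rho> \<epsilon>) i e j
        + Dx_tilde nx Hx Qx (\<lambda>i' e' j'. \<Sum>k<nv. \<omega> k * v k * g \<epsilon> k i' e' j') i e j"
    using scheme by eventually_elim (use i e j in \<open>auto simp: kinetic_scheme_def\<close>)
  from Lim_transform_eventually[OF rhs this] lhs
  have "Dt_op nt Ht Qt \<rho>lim i e j + Dx_tilde nx Hx Qx (\<lambda>i e j. - (c * Dx_tilde nx Hx Qx \<rho>lim i e j)) i e j
      = - \<sigma>a * \<rho>lim i e j - SAT Ht \<rho>lim \<rho>0 i e j"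
    using tendsto_unique[OF trivial_limit_at_right_real] by blast
  then show "Dt_op nt Ht Qt \<rho>lim i e j
      = Dx_tilde nx Hx Qx (\<lambda>i' e' j'. (\<Sum>k<nv. \<omega> k * v k ^ 2) / \<sigma>s * Dx_tilde nx Hx Qx \<rho>lim i' e' j') i e j
        - \<sigma>a * \<rho>lim i e j - SAT Ht \<rho>lim \<rho>0 i e j"
    unfolding c_def Dx_tilde_uminus by linarith
qed

end

theorem theorem3p9:
  fixes nt nx nv pt px :: nat
    and tn xn :: "nat \<Rightarrow> real"
    and Ht Qt Hx Qx :: rmat
    and v \<omega> :: "nat \<Rightarrow> real"
    and \<sigma>s \<sigma>a :: real
  assumes sbp_t: "is_sbp nt pt tn Ht Qt"
    and sbp_x: "is_sbp nx px xn Hx Qx"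
    and w_pos: "\<forall>k<nv. 0 < \<omega> k"
    and w_sum: "(\<Sum>k<nv. \<omega> k) = 1"
    and w_mom: "(\<Sum>k<nv. \<omega> k * v k) = 0"
    and sig_s: "0 < \<sigma>s"
    and sig_a: "0 \<le> \<sigma>a"
  shows
    \<comment> \<open>(1) formal limit epsilon -> 0: the scheme reduces to the limit scheme\<close>
    "(\<forall>(\<rho> :: real \<Rightarrow> grid) (g :: real \<Rightarrow> nat \<Rightarrow> grid) \<rho>0 g0 \<rho>lim.
        (\<forall>\<^sub>F \<epsilon> in at_right 0.
            kinetic_scheme nt nx Ht Qt Hx Qx nv v \<omega> \<sigma>s \<sigma>a \<epsilon> (\<rho> \<epsilon>) (g \<epsilon>) \<rho>0 g0)
      \<and> (\<forall>i\<le>nt. \<forall>e<3. \<forall>j\<le>nx. ((\<lambda>\<epsilon>. \<rho> \<epsilon> i e j) \<longlongrightarrow> \<rho>lim i e j) (at_right 0))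
      \<and> (\<exists>B. \<forall>\<^sub>F \<epsilon> in at_right 0.
            \<forall>k<nv. \<forall>i\<le>nt. \<forall>e<3. \<forall>j\<le>nx. \<bar>g \<epsilon> k i e j\<bar> \<le> B)
      \<longrightarrow> limit_scheme nt nx Ht Qt Hx Qx nv v \<omega> \<sigma>s \<sigma>a \<rho>lim \<rho>0)
   \<and>
    \<comment> \<open>(2) consistency of the limit scheme: exact for element-wise polynomials
        (degree <= pt in t, <= px in x) that are C^1 across the periodic interfaces\<close>
    (\<forall>a. (\<forall>e<3. \<forall>s.
            epoly pt px a e s (xn nx) = epoly pt px a ((e + 1) mod 3) s (xn 0)
          \<and> deriv (epoly pt px a e s) (xn nx) = deriv (epoly pt px a ((e + 1) mod 3) s) (xn 0))
      \<longrightarrow> (\<forall>i\<le>nt. \<forall>e<3. \<forall>j\<le>nx.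
            Dt_op nt Ht Qt (\<lambda>i' e' j'. epoly pt px a e' (tn i') (xn j')) i e j
            - Dx_tilde nx Hx Qx (\<lambda>i' e' j'. (\<Sum>k<nv. \<omega> k * v k ^ 2) / \<sigma>s
                 * Dx_tilde nx Hx Qx (\<lambda>i'' e'' j''. epoly pt px a e'' (tn i'') (xn j'')) i' e' j') i e j
            + \<sigma>a * epoly pt px a e (tn i) (xn j)
            + SAT Ht (\<lambda>i' e' j'. epoly pt px a e' (tn i') (xn j'))
                     (\<lambda>e' j'. epoly pt px a e' (tn 0) (xn j')) i e j
          = deriv (\<lambda>s. epoly pt px a e s (xn j)) (tn i)
            - (\<Sum>k<nv. \<omega> k * v k ^ 2) / \<sigma>s
                 * deriv (deriv (epoly pt px a e (tn i))) (xn j)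
            + \<sigma>a * epoly pt px a e (tn i) (xn j)))
   \<and>
    \<comment> \<open>(3) stability of the limit scheme: final-time energy bounded by initial data\<close>
    (\<forall>\<rho> \<rho>0. limit_scheme nt nx Ht Qt Hx Qx nv v \<omega> \<sigma>s \<sigma>a \<rho> \<rho>0
       \<longrightarrow> senergy nx Hx (\<rho> nt) \<le> senergy nx Hx \<rho>0)"
proof -
  have "0 \<le> (\<Sum>k<nv. \<omega> k * v k ^ 2)"
    using w_pos by (intro sum_nonneg) (simp add: less_imp_le)
  then have c_nonneg: "0 \<le> (\<Sum>k<nv. \<omega> k * v k ^ 2) / \<sigma>s"
    using sig_s by simp
  show ?thesis
  proof (intro conjI allI impI, goal_cases)
    case (1 \<rho> g \<rho>0 g0 \<rho>lim)
    then show ?case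
      using kinetic_scheme_tendsto_limit_scheme[OF sig_s] by blast
  next
    case (2 a i e j)
    then show ?case
      by (intro limit_scheme_consistent[OF sbp_t sbp_x])
  next
    case (3 \<rho> \<rho>0)
    then show ?case
      by (rule limit_scheme_energy_stable[OF sbp_t sbp_x c_nonneg sig_a])
  qed
qed

end
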